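(* Let $q$ be a prime power, $\alpha$ a primitive element of $\mathbb{F}_q$, and let $P$ be the $(q-1)\times(q-1)$ matrix over $\mathbb{F}_q$ with rows and columns indexed by $0,1,\dots,q-2$, defined by $P(s,s)=0$ and $P(s,t)=\dfrac{\alpha^s}{\alpha^s-\alpha^t}$ for $s\neq t$. Then every $2\times 2$ submatrix of $P$ is invertible. *)

theory Defs
  imports "HOL-Analysis.Analysis"
begin

definition primitive_element :: "'a::{field,finite} \<Rightarrow> bool" where
  "primitive_element a \<longleftrightarrow> a \<noteq> 0 \<and> (\<forall>x. x \<noteq> 0 \<longrightarrow> (\<exists>k::nat. x = a ^ k))"

definition Pmat :: "'a::{field,finite} \<Rightarrow> nat \<Rightarrow> nat \<Rightarrow> 'a" where
  "Pmat a s t = (if s = t then 0 else a ^ s / (a ^ s - a ^ t))"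

definition submat2 :: "(nat \<Rightarrow> nat \<Rightarrow> 'a) \<Rightarrow> nat \<Rightarrow> nat \<Rightarrow> nat \<Rightarrow> nat \<Rightarrow> 'a ^ 2 ^ 2" where
  "submat2 M s1 s2 t1 t2 =
     (\<chi> i j. M (if i = 1 then s1 else s2) (if j = 1 then t1 else t2))"

end

theory Submission
  imports Defs
begin

(* Write x s = \<alpha>^s; these are distinct and nonzero for s < q - 1, and P(s,t) = x s / (x s - x t)
   off the diagonal, so off-diagonal entries never vanish. If the two rows and two columns share
   no index, the minor is x1 x2 (x1 - x2)(y2 - y1) divided by a product of nonzero differences;
   otherwise one of the two diagonal products contains a zero entry of P and the other does not. *)

lemma power_mod_eq_if_power_eq_1:
  fixes a :: "'a::monoid_mult"
  assumes "a ^ d = 1"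
  shows "a ^ (k mod d) = a ^ k"
proof -
  have "a ^ k = (a ^ d) ^ (k div d) * a ^ (k mod d)"
    by (simp flip: power_mult power_add)
  with assms show ?thesis by simp
qed

lemma primitive_element_power_eq_1_imp_le:
  fixes a :: "'a::{field,finite}"
  assumes "primitive_element a" and "a ^ d = 1" and "0 < d"
  shows "CARD('a) - 1 \<le> d"
proof -
  have "UNIV - {0} \<subseteq> (\<lambda>k. a ^ k) ` {..<d}"
  proof
    fix x :: 'a
    assume "x \<in> UNIV - {0}"
    then obtain k where "x = a ^ k"
      using assms(1) by (auto simp: primitive_element_def)
    then have "x = a ^ (k mod d)"
      using power_mod_eq_if_power_eq_1[OF assms(2)] by simp
    then show "x \<in> (\<lambda>k. a ^ k) ` {..<d}"
      using \<open>0 < d\<close> by auto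
  qed
  then have "card (UNIV - {0::'a}) \<le> card ((\<lambda>k. a ^ k) ` {..<d})"
    by (intro card_mono) auto
  also have "\<dots> \<le> d"
    using card_image_le[of "{..<d}" "\<lambda>k. a ^ k"] by simp
  finally show ?thesis
    by (simp add: card_Diff_singleton)
qed

lemma inj_on_power_primitive_element:
  fixes a :: "'a::{field,finite}"
  assumes "primitive_element a"
  shows "inj_on (\<lambda>k. a ^ k) {..<CARD('a) - 1}"
proof -
  have "a ^ i \<noteq> a ^ j" if "i < j" and "j < CARD('a) - 1" for i j
  proof
    assume "a ^ i = a ^ j"
    also have "a ^ j = a ^ i * a ^ (j - i)"
      using \<open>i < j\<close> by (simp flip: power_add)
    finally have "a ^ (j - i) = 1"
      using assms by (simp add: primitive_element_def)
    then have "CARD('a) - 1 \<le> j - i"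
      using primitive_element_power_eq_1_imp_le[OF assms] \<open>i < j\<close> by simp
    with that show False by simp
  qed
  then show ?thesis
    by (intro inj_onI) (metis lessThan_iff linorder_neqE_nat)
qed

definition cauchy_like :: "(nat \<Rightarrow> 'a::field) \<Rightarrow> nat \<Rightarrow> nat \<Rightarrow> 'a" where
  "cauchy_like x s t = (if s = t then 0 else x s / (x s - x t))"

lemma Pmat_eq_cauchy_like: "Pmat a = cauchy_like (\<lambda>k. a ^ k)"
  by (intro ext) (simp add: Pmat_def cauchy_like_def)

lemma cauchy_like_nonzero:
  assumes "inj_on x I" and "0 \<notin> x ` I" and "s \<in> I" and "t \<in> I" and "s \<noteq> t"
  shows "cauchy_like x s t \<noteq> 0"
  using assms by (auto simp: cauchy_like_def inj_on_eq_iff)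

lemma cauchy_minor_2:
  fixes x1 x2 y1 y2 :: "'a::field"
  assumes "x1 \<noteq> y1" and "x1 \<noteq> y2" and "x2 \<noteq> y1" and "x2 \<noteq> y2"
  shows "x1 / (x1 - y1) * (x2 / (x2 - y2)) - x1 / (x1 - y2) * (x2 / (x2 - y1)) =
    x1 * x2 * (x1 - x2) * (y2 - y1) / ((x1 - y1) * (x2 - y2) * (x1 - y2) * (x2 - y1))"
proof -
  have "x1 - y1 \<noteq> 0" "x1 - y2 \<noteq> 0" "x2 - y1 \<noteq> 0" "x2 - y2 \<noteq> 0"
    using assms by auto
  then show ?thesis
    by (simp add: divide_simps) (simp add: algebra_simps)
qed

lemma cauchy_like_minor_nonzero:
  assumes inj: "inj_on x I" and nz: "0 \<notin> x ` I"
    and I: "s1 \<in> I" "s2 \<in> I" "t1 \<in> I" "t2 \<in> I" and "s1 \<noteq> s2" and "t1 \<noteq> t2"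
  shows "cauchy_like x s1 t1 * cauchy_like x s2 t2 - cauchy_like x s1 t2 * cauchy_like x s2 t1 \<noteq> 0"
proof (cases "s1 \<in> {t1, t2} \<or> s2 \<in> {t1, t2}")
  case True
  have "cauchy_like x s t \<noteq> 0" if "s \<in> {s1, s2}" "t \<in> {t1, t2}" "s \<noteq> t" for s t
    using cauchy_like_nonzero[OF inj nz] that I by blast
  with True \<open>s1 \<noteq> s2\<close> \<open>t1 \<noteq> t2\<close> show ?thesis
    by (auto simp: cauchy_like_def)
next
  case False
  have x_ne: "x s \<noteq> x t" if "s \<in> I" "t \<in> I" "s \<noteq> t" for s t
    using that inj_on_eq_iff[OF inj] by blast
  have "cauchy_like x s1 t1 * cauchy_like x s2 t2 - cauchy_like x s1 t2 * cauchy_like x s2 t1 =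
      x s1 / (x s1 - x t1) * (x s2 / (x s2 - x t2)) - x s1 / (x s1 - x t2) * (x s2 / (x s2 - x t1))"
    using False by (simp add: cauchy_like_def)
  also have "\<dots> = x s1 * x s2 * (x s1 - x s2) * (x t2 - x t1) /
      ((x s1 - x t1) * (x s2 - x t2) * (x s1 - x t2) * (x s2 - x t1))"
    by (rule cauchy_minor_2) (use I x_ne False in auto)
  also have "\<dots> \<noteq> 0"
    using I nz x_ne False \<open>s1 \<noteq> s2\<close> \<open>t1 \<noteq> t2\<close> by auto
  finally show ?thesis .
qed

lemma det_submat2:
  "det (submat2 M s1 s2 t1 t2) = M s1 t1 * M s2 t2 - M s1 t2 * M s2 t1"
  by (simp add: det_2 submat2_def)

theorem lemma2p17:
  fixes \<alpha> :: "'a::{field,finite}"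
  assumes "primitive_element \<alpha>"
    and "s1 < s2" and "s2 < CARD('a) - 1"
    and "t1 < t2" and "t2 < CARD('a) - 1"
  shows "invertible (submat2 (Pmat \<alpha>) s1 s2 t1 t2)"
proof -
  let ?I = "{..<CARD('a) - 1}"
  have "inj_on (\<lambda>k. \<alpha> ^ k) ?I"
    using inj_on_power_primitive_element[OF assms(1)] .
  moreover have "0 \<notin> (\<lambda>k. \<alpha> ^ k) ` ?I"
    using assms(1) by (auto simp: primitive_element_def)
  ultimately have "det (submat2 (Pmat \<alpha>) s1 s2 t1 t2) \<noteq> 0"
    unfolding det_submat2 Pmat_eq_cauchy_like
    by (rule cauchy_like_minor_nonzero) (use assms(2-5) in auto)
  then show ?thesis
    by (simp add: invertible_det_nz)
qed

end
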